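(* Let $G$ be a directed graph with vertices $s,t$, $k\ge1$, and $e\in E(G)$. The multiplicity function $\mu_e:U^k_{\mathrm{lr}}\to\mathbb N$ is modular on the lattice $L^*$, i.e. $\mu_e(C_1\vee C_2)+\mu_e(C_1\wedge C_2)=\mu_e(C_1)+\mu_e(C_2)$ for all $C_1,C_2\in L^*$.
   Context: An $s$-$t$ cut of a directed graph $G$ is a set $X\subseteq E(G)$ such that removing $X$ leaves no directed $s$-$t$ path; $\Gamma_G(s,t)$ is the set of $s$-$t$ cuts of minimum cardinality $\lambda(G)$. Fix a maximum-size collection $\mathcal P$ of pairwise edge-disjoint directed $s$-$t$ paths (each minimum $s$-$t$ cut contains exactly one edge of each path in $\mathcal P$). For $X,Y\in\Gamma_G(s,t)$, $S_{\min}(X\cup Y)$ (resp. $S_{\max}(X\cup Y)$) consists, for each $p\in\mathcal P$, of the edge of $(X\cup Y)\cap p$ occurring first (resp. last) along $p$. $X\le Y$ means every directed $s$-$t$ path meets an edge of $X$ at or before an edge of $Y$. $U^k_{\mathrm{lr}}$ is the set of $k$-tuples $[X_1,\dots,X_k]$ of elements of $\Gamma_G(s,t)$ with $X_i\le X_j$ for all $i<j$. $L^*$ is the lattice on $U^k_{\mathrm{lr}}$ with componentwise order ($[X_i]\preceq[Y_i]$ iff $X_i\le Y_i$ for all $i$), join $[X_i]_i\vee[Y_i]_i=[S_{\max}(X_i\cup Y_i)]_i$ and meet $[X_i]_i\wedge[Y_i]_i=[S_{\min}(X_i\cup Y_i)]_i$. For $C=[X_1,\dots,X_k]$, $\mu_e(C)$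 is the number of indices $i$ with $e\in X_i$. *)

theory Defs
  imports Main
begin

text \<open>A directed (multi)graph is given by a finite edge set E together with
tail/head maps src, tgt on edges.\<close>

definition is_st_path ::
  "'e set \<Rightarrow> ('e \<Rightarrow> 'v) \<Rightarrow> ('e \<Rightarrow> 'v) \<Rightarrow> 'v \<Rightarrow> 'v \<Rightarrow> 'e list \<Rightarrow> bool" where
  "is_st_path E src tgt s t p \<longleftrightarrow>
     p \<noteq> [] \<and> set p \<subseteq> E \<and> src (hd p) = s \<and> tgt (last p) = t \<and>
     (\<forall>i. Suc i < length p \<longrightarrow> tgt (p ! i) = src (p ! Suc i)) \<and>
     distinct (map src p @ [tgt (last p)])"

definition is_st_cut ::
  "'e set \<Rightarrow> ('e \<Rightarrow> 'v) \<Rightarrow> ('e \<Rightarrow> 'v) \<Rightarrow> 'v \<Rightarrow> 'v \<Rightarrow> 'e set \<Rightarrow> bool" where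
  "is_st_cut E src tgt s t X \<longleftrightarrow> X \<subseteq> E \<and>
     (\<forall>p. is_st_path E src tgt s t p \<longrightarrow> set p \<inter> X \<noteq> {})"

definition min_cuts ::
  "'e set \<Rightarrow> ('e \<Rightarrow> 'v) \<Rightarrow> ('e \<Rightarrow> 'v) \<Rightarrow> 'v \<Rightarrow> 'v \<Rightarrow> 'e set set" where
  "min_cuts E src tgt s t = {X. is_st_cut E src tgt s t X \<and>
     (\<forall>Y. is_st_cut E src tgt s t Y \<longrightarrow> card X \<le> card Y)}"

definition edge_disjoint_paths ::
  "'e set \<Rightarrow> ('e \<Rightarrow> 'v) \<Rightarrow> ('e \<Rightarrow> 'v) \<Rightarrow> 'v \<Rightarrow> 'v \<Rightarrow> 'e list set \<Rightarrow> bool" where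
  "edge_disjoint_paths E src tgt s t P \<longleftrightarrow>
     (\<forall>p\<in>P. is_st_path E src tgt s t p) \<and>
     (\<forall>p\<in>P. \<forall>q\<in>P. p \<noteq> q \<longrightarrow> set p \<inter> set q = {})"

definition max_disjoint_paths ::
  "'e set \<Rightarrow> ('e \<Rightarrow> 'v) \<Rightarrow> ('e \<Rightarrow> 'v) \<Rightarrow> 'v \<Rightarrow> 'v \<Rightarrow> 'e list set \<Rightarrow> bool" where
  "max_disjoint_paths E src tgt s t P \<longleftrightarrow>
     finite P \<and> edge_disjoint_paths E src tgt s t P \<and>
     (\<forall>Q. finite Q \<and> edge_disjoint_paths E src tgt s t Q \<longrightarrow> card Q \<le> card P)"

definition S_min :: "'e list set \<Rightarrow> 'e set \<Rightarrow> 'e set" where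
  "S_min P Z = (\<lambda>p. p ! (LEAST i. i < length p \<and> p ! i \<in> Z)) ` {p\<in>P. set p \<inter> Z \<noteq> {}}"

definition S_max :: "'e list set \<Rightarrow> 'e set \<Rightarrow> 'e set" where
  "S_max P Z = (\<lambda>p. p ! (GREATEST i. i < length p \<and> p ! i \<in> Z)) ` {p\<in>P. set p \<inter> Z \<noteq> {}}"

definition cut_le ::
  "'e set \<Rightarrow> ('e \<Rightarrow> 'v) \<Rightarrow> ('e \<Rightarrow> 'v) \<Rightarrow> 'v \<Rightarrow> 'v \<Rightarrow> 'e set \<Rightarrow> 'e set \<Rightarrow> bool" where
  "cut_le E src tgt s t X Y \<longleftrightarrow>
     (\<forall>p. is_st_path E src tgt s t p \<longrightarrow>
        (\<exists>i j. i \<le> j \<and> j < length p \<and> p ! i \<in> X \<and> p ! j \<in> Y))"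

definition U_lr ::
  "'e set \<Rightarrow> ('e \<Rightarrow> 'v) \<Rightarrow> ('e \<Rightarrow> 'v) \<Rightarrow> 'v \<Rightarrow> 'v \<Rightarrow> nat \<Rightarrow> 'e set list set" where
  "U_lr E src tgt s t k = {C. length C = k \<and> set C \<subseteq> min_cuts E src tgt s t \<and>
     (\<forall>i j. i < j \<and> j < k \<longrightarrow> cut_le E src tgt s t (C ! i) (C ! j))}"

definition L_join :: "'e list set \<Rightarrow> 'e set list \<Rightarrow> 'e set list \<Rightarrow> 'e set list" where
  "L_join P C D = map2 (\<lambda>X Y. S_max P (X \<union> Y)) C D"

definition L_meet :: "'e list set \<Rightarrow> 'e set list \<Rightarrow> 'e set list \<Rightarrow> 'e set list" where
  "L_meet P C D = map2 (\<lambda>X Y. S_min P (X \<union> Y)) C D"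

definition mult :: "'e \<Rightarrow> 'e set list \<Rightarrow> nat" where
  "mult e C = card {i. i < length C \<and> e \<in> C ! i}"

end

theory Submission
  imports Defs
begin

text \<open>
  By Menger's theorem a maximum family P of edge-disjoint s-t paths has as many paths as a
  minimum s-t cut has edges; since a cut meets every path of P, each minimum cut consists of
  exactly one edge on each path of P and nothing else. So on a path p two minimum cuts X, Y
  contribute edges a, b, while S_max P (X \<union> Y) and S_min P (X \<union> Y) contribute the
  later and the earlier of a and b: the same two edges, counted with multiplicity. Counting an
  edge e index by index gives the modularity of \<mu>_e.

  The needed half of Menger's theorem is proved with augmenting paths. If the residual graph of
  P has an s-t path, the symmetric difference of its edges with those of P is a balanced flow of
  value |P| + 1, which decomposes into that many edge-disjoint paths, contradicting maximality.
  Otherwise the edges leaving the set of vertices reachable from s in the residual graph form an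
  s-t cut, and no path of P leaves that set twice, since it could only re-enter it along one of
  its own edges, which the residual graph reverses.
\<close>

section \<open>Directed s-t paths and reachability\<close>

lemma is_st_path_distinct: "is_st_path E src tgt a b p \<Longrightarrow> distinct p"
  unfolding is_st_path_def by (auto simp: distinct_map)

lemma is_st_path_mono: "is_st_path E src tgt a b p \<Longrightarrow> E \<subseteq> F \<Longrightarrow> is_st_path F src tgt a b p"
  unfolding is_st_path_def by auto

lemma is_st_path_ends_differ:
  assumes "is_st_path E src tgt a b p" shows "a \<noteq> b"
proof -
  have "a \<in> src ` set p" "distinct (map src p @ [b])"
    using assms unfolding is_st_path_def by (metis hd_in_set image_eqI)+
  then show ?thesis by auto
qed

lemma is_st_path_take:
  assumes p: "is_st_path E src tgt a b p" and j: "0 < j" "j < length p"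
  shows "is_st_path E src tgt a (src (p ! j)) (take j p)"
proof -
  have chain: "\<And>i. Suc i < length p \<Longrightarrow> tgt (p ! i) = src (p ! Suc i)"
    using p unfolding is_st_path_def by blast
  obtain i where i: "j = Suc i" using j(1) by (cases j) auto
  have last: "tgt (last (take j p)) = src (p ! j)"
    using i j chain by (simp add: take_Suc_conv_app_nth)
  have "distinct (map src (take (Suc j) p))"
    using p unfolding is_st_path_def by (simp add: take_map[symmetric])
  moreover have "take (Suc j) p = take j p @ [p ! j]"
    using j by (simp add: take_Suc_conv_app_nth)
  ultimately have "distinct (map src (take j p) @ [tgt (last (take j p))])"
    using last by simp
  moreover have "set (take j p) \<subseteq> E"
    using p unfolding is_st_path_def by (meson order_trans set_take_subset)
  moreover have "src (hd (take j p)) = a"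
    using p j unfolding is_st_path_def by (simp add: hd_take)
  moreover have "\<forall>i. Suc i < length (take j p) \<longrightarrow> tgt (take j p ! i) = src (take j p ! Suc i)"
    using chain by simp
  moreover have "take j p \<noteq> []"
    using j by (cases p) auto
  ultimately show ?thesis
    using last unfolding is_st_path_def by blast
qed

lemma is_st_path_snoc:
  assumes p: "is_st_path E src tgt a b p" and e: "e \<in> E" "src e = b"
    and new: "tgt e \<notin> src ` set p" "tgt e \<noteq> b"
  shows "is_st_path E src tgt a (tgt e) (p @ [e])"
proof -
  have ne: "p \<noteq> []" and sub: "set p \<subseteq> E" and hd: "src (hd p) = a" and last: "tgt (last p) = b"
    and chain: "\<And>i. Suc i < length p \<Longrightarrow> tgt (p ! i) = src (p ! Suc i)"
    and dist: "distinct (map src p @ [tgt (last p)])"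
    using p unfolding is_st_path_def by blast+
  have "tgt ((p @ [e]) ! i) = src ((p @ [e]) ! Suc i)" if "Suc i < length (p @ [e])" for i
  proof (cases "Suc i < length p")
    case True
    then show ?thesis using chain by (simp add: nth_append)
  next
    case False
    then have "i = length p - 1" using that by simp
    then show ?thesis using False ne last e by (simp add: nth_append last_conv_nth)
  qed
  moreover have "distinct (map src (p @ [e]) @ [tgt (last (p @ [e]))])"
    using dist last e new by (simp add: image_iff)
  ultimately show ?thesis
    using ne sub hd e unfolding is_st_path_def by auto
qed

definition reachable :: "'e set \<Rightarrow> ('e \<Rightarrow> 'v) \<Rightarrow> ('e \<Rightarrow> 'v) \<Rightarrow> 'v \<Rightarrow> 'v set" where
  "reachable E src tgt s = insert s {v. \<exists>p. is_st_path E src tgt s v p}"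

lemma finite_reachable:
  assumes "finite E" shows "finite (reachable E src tgt s)"
proof -
  have "reachable E src tgt s \<subseteq> insert s (tgt ` E)"
    unfolding reachable_def is_st_path_def by (auto intro!: imageI)
  then show ?thesis using assms finite_subset by blast
qed

lemma reachable_closed:
  assumes v: "v \<in> reachable E src tgt s" and e: "e \<in> E" "src e = v"
  shows "tgt e \<in> reachable E src tgt s"
proof (cases "tgt e = s \<or> tgt e = v")
  case True
  then show ?thesis using v by (auto simp: reachable_def)
next
  case False
  consider "v = s" | p where "is_st_path E src tgt s v p"
    using v unfolding reachable_def by auto
  then show ?thesis
  proof cases
    case 1
    then have "is_st_path E src tgt s (tgt e) [e]"
      unfolding is_st_path_def using e False by auto
    then show ?thesis by (auto simp: reachable_def)
  next
    case (2 p)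
    show ?thesis
    proof (cases "tgt e \<in> src ` set p")
      case True
      then obtain j where j: "j < length p" "src (p ! j) = tgt e"
        by (auto simp: in_set_conv_nth)
      have "j \<noteq> 0"
        using 2 j False unfolding is_st_path_def by (auto simp: hd_conv_nth)
      then have "is_st_path E src tgt s (tgt e) (take j p)"
        using is_st_path_take[OF 2 _ j(1)] j(2) by simp
      then show ?thesis by (auto simp: reachable_def)
    next
      case outside: False
      have "is_st_path E src tgt s (tgt e) (p @ [e])"
        using is_st_path_snoc[OF 2 e outside] False by simp
      then show ?thesis by (auto simp: reachable_def)
    qed
  qed
qed

lemma st_path_leaves_set:
  assumes p: "is_st_path E src tgt a b p" and "a \<in> R" "b \<notin> R"
  shows "\<exists>e\<in>set p. src e \<in> R \<and> tgt e \<notin> R"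
proof (rule ccontr)
  assume stays: "\<not> ?thesis"
  have ne: "p \<noteq> []" and hd: "src (hd p) = a" and last: "tgt (last p) = b"
    and chain: "\<And>i. Suc i < length p \<Longrightarrow> tgt (p ! i) = src (p ! Suc i)"
    using p unfolding is_st_path_def by auto
  have "i < length p \<longrightarrow> src (p ! i) \<in> R" for i
  proof (induction i)
    case 0 then show ?case using hd ne assms(2) by (simp add: hd_conv_nth)
  next
    case (Suc i) then show ?case using chain stays by (metis Suc_lessD nth_mem)
  qed
  then have "tgt (p ! (length p - 1)) \<in> R"
    using stays ne by (metis diff_less length_greater_0_conv nth_mem zero_less_one)
  then show False using last ne assms(3) by (simp add: last_conv_nth)
qed

lemma st_path_no_reentry:
  assumes p: "is_st_path E src tgt a b p"
    and closed: "\<And>e. e \<in> set p \<Longrightarrow> tgt e \<in> R \<Longrightarrow> src e \<in> R"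
    and out: "tgt (p ! i) \<notin> R" and ij: "i < j" "j < length p"
  shows "src (p ! j) \<notin> R"
  using ij
proof (induction j)
  case 0 then show ?case by simp
next
  case (Suc j)
  have chain: "tgt (p ! j) = src (p ! Suc j)" using p Suc.prems unfolding is_st_path_def by blast
  show ?case
  proof (cases "i = j")
    case True then show ?thesis using out chain by simp
  next
    case False
    then have "src (p ! j) \<notin> R" using Suc by simp
    then have "tgt (p ! j) \<notin> R" using closed Suc.prems by (meson Suc_lessD nth_mem)
    then show ?thesis using chain by simp
  qed
qed

section \<open>Net outflow and flow decomposition\<close>

definition net_outflow :: "('e \<Rightarrow> 'v) \<Rightarrow> ('e \<Rightarrow> 'v) \<Rightarrow> 'e set \<Rightarrow> 'v \<Rightarrow> int" where
  "net_outflow src tgt A v = (\<Sum>e\<in>A. of_bool (src e = v) - of_bool (tgt e = v))"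

lemma net_outflow_st_path:
  assumes p: "is_st_path E src tgt a b p"
  shows "net_outflow src tgt (set p) v = of_bool (a = v) - of_bool (b = v)"
proof -
  define n where "n = length p"
  define w where "w i = (if i < n then src (p ! i) else tgt (last p))" for i
  have ne: "p \<noteq> []" and hd: "src (hd p) = a" and last: "tgt (last p) = b"
    and chain: "\<And>i. Suc i < length p \<Longrightarrow> tgt (p ! i) = src (p ! Suc i)"
    using p unfolding is_st_path_def by auto
  have tgt_w: "tgt (p ! i) = w (Suc i)" if "i < n" for i
  proof (cases "Suc i < n")
    case True then show ?thesis using chain w_def n_def by auto
  next
    case False then have "i = n - 1" using that by auto
    then show ?thesis using False ne n_def w_def by (simp add: last_conv_nth)
  qed
  have "net_outflow src tgt (set p) v = (\<Sum>e\<leftarrow>p. of_bool (src e = v) - of_bool (tgt e = v))"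
    unfolding net_outflow_def using is_st_path_distinct[OF p] by (simp add: sum_list_distinct_conv_sum_set)
  also have "\<dots> = (\<Sum>i<n. of_bool (src (p ! i) = v) - of_bool (tgt (p ! i) = v))"
    unfolding n_def by (simp add: sum_list_sum_nth atLeast0LessThan)
  also have "\<dots> = (\<Sum>i<n. of_bool (w i = v) - of_bool (w (Suc i) = v))"
    by (rule sum.cong) (auto simp: tgt_w w_def)
  also have "\<dots> = of_bool (w 0 = v) - of_bool (w n = v)"
    by (rule sum_lessThan_telescope')
  also have "w 0 = a" using ne hd n_def w_def by (simp add: hd_conv_nth)
  also have "w n = b" using last w_def by simp
  finally show ?thesis .
qed

lemma net_outflow_Diff:
  "finite A \<Longrightarrow> B \<subseteq> A \<Longrightarrow> net_outflow src tgt (A - B) v = net_outflow src tgt A v - net_outflow src tgt B v"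
  unfolding net_outflow_def by (simp add: sum.subset_diff[of B A])

lemma sum_net_outflow:
  assumes "finite R"
  shows "(\<Sum>v\<in>R. net_outflow src tgt F v) = (\<Sum>e\<in>F. of_bool (src e \<in> R) - of_bool (tgt e \<in> R))"
proof -
  have "(\<Sum>v\<in>R. net_outflow src tgt F v) = (\<Sum>e\<in>F. \<Sum>v\<in>R. of_bool (src e = v) - of_bool (tgt e = v))"
    unfolding net_outflow_def by (rule sum.swap)
  also have "\<dots> = (\<Sum>e\<in>F. of_bool (src e \<in> R) - of_bool (tgt e \<in> R))"
    using assms by (simp add: sum_subtractf of_bool_def sum.delta)
  finally show ?thesis .
qed

lemma edge_disjoint_paths_mono:
  "edge_disjoint_paths E src tgt s t Q \<Longrightarrow> E \<subseteq> F \<Longrightarrow> edge_disjoint_paths F src tgt s t Q"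
  unfolding edge_disjoint_paths_def by (meson is_st_path_mono)

lemma balanced_flow_reaches_target:
  assumes "finite F"
    and balanced: "\<And>v. v \<noteq> s \<Longrightarrow> v \<noteq> t \<Longrightarrow> net_outflow src tgt F v = 0"
    and source: "net_outflow src tgt F s > 0"
  shows "t \<in> reachable F src tgt s"
proof (rule ccontr)
  define R where "R = reachable F src tgt s"
  assume "t \<notin> reachable F src tgt s"
  then have "t \<notin> R" by (simp add: R_def)
  have fin: "finite R" unfolding R_def using assms(1) by (rule finite_reachable)
  have "s \<in> R" unfolding R_def reachable_def by simp
  have "(\<Sum>v\<in>R - {s}. net_outflow src tgt F v) = 0"
    using balanced \<open>t \<notin> R\<close> by (intro sum.neutral) auto
  then have "net_outflow src tgt F s = (\<Sum>v\<in>R. net_outflow src tgt F v)"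
    using sum.remove[OF fin \<open>s \<in> R\<close>, of "net_outflow src tgt F"] by simp
  also have "\<dots> = (\<Sum>e\<in>F. of_bool (src e \<in> R) - of_bool (tgt e \<in> R))"
    using fin by (rule sum_net_outflow)
  also have "\<dots> \<le> 0"
  proof (rule sum_nonpos)
    fix e assume "e \<in> F"
    then have "src e \<in> R \<Longrightarrow> tgt e \<in> R" unfolding R_def by (blast intro: reachable_closed)
    then show "of_bool (src e \<in> R) - of_bool (tgt e \<in> R) \<le> (0::int)" by auto
  qed
  finally show False using source by simp
qed

lemma edge_disjoint_paths_insert:
  assumes p: "is_st_path F src tgt s t p"
    and Q: "edge_disjoint_paths (F - set p) src tgt s t Q"
  shows "p \<notin> Q" and "edge_disjoint_paths F src tgt s t (insert p Q)"
proof -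
  have outside: "set q \<inter> set p = {}" if "q \<in> Q" for q
    using Q that unfolding edge_disjoint_paths_def is_st_path_def by blast
  have "hd p \<in> set p"
    using p unfolding is_st_path_def by (blast intro: hd_in_set)
  then show "p \<notin> Q"
    using outside by blast
  have Q_in_F: "edge_disjoint_paths F src tgt s t Q"
    by (rule edge_disjoint_paths_mono[OF Q]) auto
  show "edge_disjoint_paths F src tgt s t (insert p Q)"
    unfolding edge_disjoint_paths_def
  proof (intro conjI ballI impI)
    fix q assume "q \<in> insert p Q"
    then show "is_st_path F src tgt s t q"
      using p Q_in_F unfolding edge_disjoint_paths_def by blast
  next
    fix q r assume "q \<in> insert p Q" "r \<in> insert p Q" "q \<noteq> r"
    moreover have "set q \<inter> set r = {}" if "q \<in> Q" "r \<in> Q" "q \<noteq> r" for q r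
      using Q_in_F that unfolding edge_disjoint_paths_def by blast
    ultimately show "set q \<inter> set r = {}"
      using outside by blast
  qed
qed

lemma flow_decomposition:
  assumes "finite F" "s \<noteq> t"
    and "\<And>v. v \<noteq> s \<Longrightarrow> v \<noteq> t \<Longrightarrow> net_outflow src tgt F v = 0"
    and "net_outflow src tgt F s = int m"
  shows "\<exists>Q. finite Q \<and> card Q = m \<and> edge_disjoint_paths F src tgt s t Q"
  using assms
proof (induction m arbitrary: F)
  case 0
  then show ?case by (intro exI[of _ "{}"]) (simp add: edge_disjoint_paths_def)
next
  case (Suc m)
  have "t \<in> reachable F src tgt s"
    by (rule balanced_flow_reaches_target) (use Suc.prems in auto)
  then obtain p where p: "is_st_path F src tgt s t p"
    using Suc.prems(2) unfolding reachable_def by blast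
  have pF: "set p \<subseteq> F"
    using p unfolding is_st_path_def by blast
  have "net_outflow src tgt (F - set p) v
      = net_outflow src tgt F v - (of_bool (s = v) - of_bool (t = v))" for v
    unfolding net_outflow_Diff[OF Suc.prems(1) pF] net_outflow_st_path[OF p] ..
  then obtain Q where Q: "finite Q" "card Q = m" "edge_disjoint_paths (F - set p) src tgt s t Q"
    using Suc.IH[of "F - set p"] Suc.prems by auto
  then show ?case
    using edge_disjoint_paths_insert[OF p Q(3)] by (intro exI[of _ "insert p Q"]) simp
qed

lemma net_outflow_edge_disjoint_paths:
  assumes "finite P" "edge_disjoint_paths E src tgt s t P"
  shows "net_outflow src tgt (\<Union>p\<in>P. set p) v = int (card P) * (of_bool (s = v) - of_bool (t = v))"
proof -
  have "net_outflow src tgt (\<Union>p\<in>P. set p) v = (\<Sum>p\<in>P. net_outflow src tgt (set p) v)"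
    using assms unfolding net_outflow_def edge_disjoint_paths_def by (intro sum.UNION_disjoint) auto
  also have "\<dots> = (\<Sum>p\<in>P. of_bool (s = v) - of_bool (t = v))"
  proof (rule sum.cong[OF refl])
    fix p assume "p \<in> P"
    then have "is_st_path E src tgt s t p" using assms(2) unfolding edge_disjoint_paths_def by blast
    then show "net_outflow src tgt (set p) v = of_bool (s = v) - of_bool (t = v)"
      by (rule net_outflow_st_path)
  qed
  finally show ?thesis by simp
qed

section \<open>Menger's inequality\<close>

text \<open>When F is the edge set of a family of edge-disjoint paths, the endpoint maps
  reverse_on F src tgt and reverse_on F tgt src describe the residual graph of the
  corresponding unit flow.\<close>
definition reverse_on :: "'e set \<Rightarrow> ('e \<Rightarrow> 'v) \<Rightarrow> ('e \<Rightarrow> 'v) \<Rightarrow> 'e \<Rightarrow> 'v" where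
  "reverse_on F f g e = (if e \<in> F then g e else f e)"

lemma net_outflow_symdiff:
  assumes "finite F" "finite Q"
  shows "net_outflow src tgt (sym_diff F Q) v
       = net_outflow src tgt F v + net_outflow (reverse_on F src tgt) (reverse_on F tgt src) Q v"
proof -
  define g where "g e = (of_bool (src e = v) - of_bool (tgt e = v) :: int)" for e
  have "net_outflow src tgt (sym_diff F Q) v = sum g (F - Q) + sum g (Q - F)"
    unfolding net_outflow_def g_def using assms by (intro sum.union_disjoint) auto
  moreover have "net_outflow src tgt F v = sum g (F - Q) + sum g (F \<inter> Q)"
    unfolding net_outflow_def g_def using assms(1) sum.Int_Diff[of F _ Q] by (simp add: add.commute)
  moreover have "net_outflow (reverse_on F src tgt) (reverse_on F tgt src) Q v = sum g (Q - F) - sum g (F \<inter> Q)"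
  proof -
    have "net_outflow (reverse_on F src tgt) (reverse_on F tgt src) Q v
        = (\<Sum>e\<in>Q - F. g e) + (\<Sum>e\<in>Q \<inter> F. - g e)"
      unfolding net_outflow_def reverse_on_def g_def using assms(2)
      by (subst sum.Int_Diff[of Q _ F]) (auto intro!: sum.cong)
    then show ?thesis by (simp add: sum_negf Int_commute)
  qed
  ultimately show ?thesis by simp
qed

lemma no_augmenting_path:
  assumes "finite E" and max: "max_disjoint_paths E src tgt s t P"
    and F: "F = (\<Union>p\<in>P. set p)"
  shows "\<not> is_st_path E (reverse_on F src tgt) (reverse_on F tgt src) s t q"
proof
  assume q: "is_st_path E (reverse_on F src tgt) (reverse_on F tgt src) s t q"
  have "s \<noteq> t" using is_st_path_ends_differ[OF q] .
  have P: "finite P" "edge_disjoint_paths E src tgt s t P"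
    using max unfolding max_disjoint_paths_def by auto
  have "F \<subseteq> E" "set q \<subseteq> E"
    using P(2) q unfolding F edge_disjoint_paths_def is_st_path_def by auto
  then have "finite F" and F'_sub: "sym_diff F (set q) \<subseteq> E"
    using \<open>finite E\<close> finite_subset by auto
  let ?F' = "sym_diff F (set q)"
  have "net_outflow src tgt ?F' v = int (Suc (card P)) * (of_bool (s = v) - of_bool (t = v))" for v
    using net_outflow_symdiff[OF \<open>finite F\<close>, of "set q" src tgt v] net_outflow_st_path[OF q, of v]
      net_outflow_edge_disjoint_paths[OF P, of v] F
    by (simp add: algebra_simps)
  then obtain Q where Q: "finite Q" "card Q = Suc (card P)" "edge_disjoint_paths ?F' src tgt s t Q"
    using flow_decomposition[of ?F' s t src tgt "Suc (card P)"] \<open>finite F\<close> \<open>s \<noteq> t\<close> by auto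
  have "card Q \<le> card P"
    using max edge_disjoint_paths_mono[OF Q(3) F'_sub] Q(1) unfolding max_disjoint_paths_def by blast
  then show False using Q(2) by simp
qed

lemma leaving_edges_st_cut:
  assumes "s \<in> R" "t \<notin> R"
  shows "is_st_cut E src tgt s t {e \<in> E. src e \<in> R \<and> tgt e \<notin> R}"
  unfolding is_st_cut_def
proof (intro conjI allI impI)
  fix p assume p: "is_st_path E src tgt s t p"
  then obtain e where "e \<in> set p" "src e \<in> R" "tgt e \<notin> R"
    using st_path_leaves_set[OF p assms] by blast
  moreover have "set p \<subseteq> E" using p unfolding is_st_path_def by blast
  ultimately show "set p \<inter> {e \<in> E. src e \<in> R \<and> tgt e \<notin> R} \<noteq> {}" by blast
qed auto

lemma st_path_leaves_at_most_once:
  assumes p: "is_st_path E src tgt a b p"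
    and closed: "\<And>e. e \<in> set p \<Longrightarrow> tgt e \<in> R \<Longrightarrow> src e \<in> R"
  shows "card {e \<in> set p. src e \<in> R \<and> tgt e \<notin> R} \<le> 1"
proof -
  let ?S = "{e \<in> set p. src e \<in> R \<and> tgt e \<notin> R}"
  have "x = y" if x: "x \<in> ?S" and y: "y \<in> ?S" for x y
  proof -
    obtain i where "i < length p" "p ! i = x"
      using x by (auto simp: in_set_conv_nth)
    moreover obtain j where "j < length p" "p ! j = y"
      using y by (auto simp: in_set_conv_nth)
    ultimately show ?thesis
      using st_path_no_reentry[OF p closed, of i j] st_path_no_reentry[OF p closed, of j i] x y
      by (metis (no_types, lifting) linorder_neqE_nat mem_Collect_eq)
  qed
  then show ?thesis using card_le_Suc0_iff_eq[of ?S] by auto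
qed

lemma card_residual_cut_le:
  assumes P: "finite P" "edge_disjoint_paths E src tgt s t P"
    and F: "F = (\<Union>p\<in>P. set p)"
    and R: "R = reachable E (reverse_on F src tgt) (reverse_on F tgt src) s"
  shows "card {e \<in> E. src e \<in> R \<and> tgt e \<notin> R} \<le> card P"
proof -
  define X where "X = {e \<in> E. src e \<in> R \<and> tgt e \<notin> R}"
  have closed: "reverse_on F tgt src e \<in> R" if "e \<in> E" "reverse_on F src tgt e \<in> R" for e
    unfolding R using that by (intro reachable_closed) (auto simp: R)
  have "X \<subseteq> F"
  proof
    fix e assume "e \<in> X"
    then show "e \<in> F" using closed[of e] unfolding X_def reverse_on_def by (cases "e \<in> F") auto
  qed
  moreover have "set p \<subseteq> E" if "p \<in> P" for p
    using P(2) that unfolding edge_disjoint_paths_def is_st_path_def by blast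
  ultimately have "X = (\<Union>p\<in>P. {e \<in> set p. src e \<in> R \<and> tgt e \<notin> R})"
    unfolding X_def F by blast
  then have "card X \<le> (\<Sum>p\<in>P. card {e \<in> set p. src e \<in> R \<and> tgt e \<notin> R})"
    using card_UN_le[OF P(1)] by simp
  also have "\<dots> \<le> (\<Sum>p\<in>P. 1)"
  proof (rule sum_mono)
    fix p assume "p \<in> P"
    then have p: "is_st_path E src tgt s t p" and "set p \<subseteq> F"
      using P(2) F unfolding edge_disjoint_paths_def by auto
    moreover have "set p \<subseteq> E" using p unfolding is_st_path_def by blast
    ultimately show "card {e \<in> set p. src e \<in> R \<and> tgt e \<notin> R} \<le> 1"
      using closed unfolding reverse_on_def by (intro st_path_leaves_at_most_once[OF p]) force
  qed
  finally show ?thesis unfolding X_def by simp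
qed

lemma exists_st_cut_card_le:
  assumes "finite E" and max: "max_disjoint_paths E src tgt s t P"
  shows "\<exists>X. is_st_cut E src tgt s t X \<and> card X \<le> card P"
proof (cases "s = t")
  case True
  then have "is_st_cut E src tgt s t {}"
    unfolding is_st_cut_def by (auto dest: is_st_path_ends_differ)
  then show ?thesis by auto
next
  case False
  define F where "F = (\<Union>p\<in>P. set p)"
  define R where "R = reachable E (reverse_on F src tgt) (reverse_on F tgt src) s"
  have "t \<notin> R"
    using no_augmenting_path[OF assms F_def] False unfolding R_def reachable_def by blast
  moreover have "s \<in> R" unfolding R_def reachable_def by simp
  ultimately have "is_st_cut E src tgt s t {e \<in> E. src e \<in> R \<and> tgt e \<notin> R}"
    by (rule leaving_edges_st_cut[rotated])
  moreover have "card {e \<in> E. src e \<in> R \<and> tgt e \<notin> R} \<le> card P"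
    using max unfolding max_disjoint_paths_def by (intro card_residual_cut_le[OF _ _ F_def R_def]) auto
  ultimately show ?thesis by blast
qed

section \<open>Minimum cuts and the lattice operations\<close>

definition meets_each_path_once :: "'e list set \<Rightarrow> 'e set \<Rightarrow> bool" where
  "meets_each_path_once P X \<longleftrightarrow> X \<subseteq> (\<Union>p\<in>P. set p) \<and> (\<forall>p\<in>P. \<exists>a. X \<inter> set p = {a})"

lemma meets_each_path_onceI:
  assumes X: "finite X" and P: "finite P"
    and disjoint: "\<And>p q. p \<in> P \<Longrightarrow> q \<in> P \<Longrightarrow> p \<noteq> q \<Longrightarrow> set p \<inter> set q = {}"
    and hits: "\<And>p. p \<in> P \<Longrightarrow> X \<inter> set p \<noteq> {}"
    and card_le: "card X \<le> card P"
  shows "meets_each_path_once P X"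
proof -
  define A where "A p = X \<inter> set p" for p
  have A_pos: "1 \<le> card (A p)" if "p \<in> P" for p
    using hits[OF that] unfolding A_def by (simp add: Suc_le_eq card_gt_0_iff)
  have card_UN: "card (\<Union>p\<in>P. A p) = (\<Sum>p\<in>P. card (A p))"
    using P disjoint unfolding A_def by (intro card_UN_disjoint) auto
  have UN_sub: "(\<Union>p\<in>P. A p) \<subseteq> X" unfolding A_def by blast
  have sum_le: "(\<Sum>p\<in>P. card (A p)) \<le> card P"
    using card_UN card_mono[OF X UN_sub] card_le by simp
  have A_one: "card (A p) = 1" if "p \<in> P" for p
  proof (rule ccontr)
    assume "card (A p) \<noteq> 1"
    then have "1 < card (A p)" using A_pos[OF that] by simp
    then have "(\<Sum>q\<in>P. 1) < (\<Sum>q\<in>P. card (A q))"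
      using A_pos that by (intro sum_strict_mono_ex1[OF P]) auto
    then show False using sum_le by simp
  qed
  then have "card X \<le> card (\<Union>p\<in>P. A p)"
    using card_UN card_le by simp
  then have "(\<Union>p\<in>P. A p) = X"
    using card_seteq[OF X UN_sub] by blast
  then show ?thesis
    using A_one unfolding meets_each_path_once_def A_def by (auto simp: card_1_singleton_iff)
qed

lemma min_cut_meets_each_path_once:
  assumes "finite E" and max: "max_disjoint_paths E src tgt s t P"
    and X: "X \<in> min_cuts E src tgt s t"
  shows "meets_each_path_once P X"
proof (rule meets_each_path_onceI)
  have cut: "is_st_cut E src tgt s t X"
    using X unfolding min_cuts_def by blast
  then show "finite X"
    using \<open>finite E\<close> finite_subset unfolding is_st_cut_def by blast
  obtain Y where "is_st_cut E src tgt s t Y" "card Y \<le> card P"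
    using exists_st_cut_card_le[OF assms(1,2)] by blast
  then show "card X \<le> card P"
    using X unfolding min_cuts_def by fastforce
  show "finite P" using max unfolding max_disjoint_paths_def by blast
  show "set p \<inter> set q = {}" if "p \<in> P" "q \<in> P" "p \<noteq> q" for p q
    using max that unfolding max_disjoint_paths_def edge_disjoint_paths_def by blast
  show "X \<inter> set p \<noteq> {}" if "p \<in> P" for p
  proof -
    have "is_st_path E src tgt s t p"
      using max that unfolding max_disjoint_paths_def edge_disjoint_paths_def by blast
    then show ?thesis using cut unfolding is_st_cut_def by blast
  qed
qed

lemma Greatest_nth_index_less:
  assumes "set p \<inter> Z \<noteq> {}"
  shows "(GREATEST i. i < length p \<and> p ! i \<in> Z) < length p"
proof -
  obtain i where "i < length p" "p ! i \<in> Z"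
    using assms by (auto simp: in_set_conv_nth)
  then have "i < length p \<and> p ! i \<in> Z" ..
  then show ?thesis
    by (rule conjunct1[OF GreatestI_nat[where P = "\<lambda>i. i < length p \<and> p ! i \<in> Z" and b = "length p"]]) auto
qed

lemma Least_nth_index_less:
  assumes "set p \<inter> Z \<noteq> {}"
  shows "(LEAST i. i < length p \<and> p ! i \<in> Z) < length p"
proof -
  obtain i where "i < length p" "p ! i \<in> Z"
    using assms by (auto simp: in_set_conv_nth)
  then have "i < length p \<and> p ! i \<in> Z" ..
  then show ?thesis
    by (rule conjunct1[OF LeastI[where P = "\<lambda>i. i < length p \<and> p ! i \<in> Z"]])
qed

lemma last_first_occurrence_count:
  assumes "distinct p" and Z: "set p \<inter> Z = {a, b}"
  shows "of_bool (e = p ! (GREATEST i. i < length p \<and> p ! i \<in> Z))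
       + of_bool (e = p ! (LEAST i. i < length p \<and> p ! i \<in> Z))
       = (of_bool (e = a) + of_bool (e = b) :: nat)"
proof -
  obtain i j where ij: "i < length p" "p ! i = a" "j < length p" "p ! j = b"
    using Z by (metis Int_iff in_set_conv_nth insertI1 insertI2)
  have occurrences: "(k < length p \<and> p ! k \<in> Z) \<longleftrightarrow> k = i \<or> k = j" for k
  proof
    assume k: "k < length p \<and> p ! k \<in> Z"
    then have "p ! k = p ! i \<or> p ! k = p ! j" using Z ij by (metis IntI insertE nth_mem singletonD)
    then show "k = i \<or> k = j" using k ij \<open>distinct p\<close> nth_eq_iff_index_eq by metis
  qed (use Z ij in auto)
  have "(GREATEST k. k < length p \<and> p ! k \<in> Z) = max i j"
    unfolding occurrences by (rule Greatest_equality) auto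
  moreover have "(LEAST k. k < length p \<and> p ! k \<in> Z) = min i j"
    unfolding occurrences by (rule Least_equality) auto
  ultimately show ?thesis
    using ij by (cases "i \<le> j") (auto simp: max_def min_def)
qed

lemma mem_image_nth_iff_unique:
  assumes unique: "\<And>p. p \<in> Q \<Longrightarrow> e \<in> set p \<Longrightarrow> p = p0"
    and index: "\<And>p. p \<in> Q \<Longrightarrow> f p < length p"
    and "p0 \<in> Q"
  shows "e \<in> (\<lambda>p. p ! f p) ` Q \<longleftrightarrow> e = p0 ! f p0"
proof
  assume "e \<in> (\<lambda>p. p ! f p) ` Q"
  then obtain p where p: "p \<in> Q" "e = p ! f p" by blast
  then have "p = p0" using unique index by simp
  then show "e = p0 ! f p0" using p by simp
qed (use \<open>p0 \<in> Q\<close> in blast)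

lemma S_max_S_min_count:
  assumes disjoint: "\<And>p q. p \<in> P \<Longrightarrow> q \<in> P \<Longrightarrow> p \<noteq> q \<Longrightarrow> set p \<inter> set q = {}"
    and distinct: "\<And>p. p \<in> P \<Longrightarrow> distinct p"
    and X: "meets_each_path_once P X" and Y: "meets_each_path_once P Y"
  shows "of_bool (e \<in> S_max P (X \<union> Y)) + of_bool (e \<in> S_min P (X \<union> Y))
       = (of_bool (e \<in> X) + of_bool (e \<in> Y) :: nat)"
proof -
  define Q where "Q = {p \<in> P. set p \<inter> (X \<union> Y) \<noteq> {}}"
  have S_def: "S_max P (X \<union> Y) = (\<lambda>p. p ! (GREATEST i. i < length p \<and> p ! i \<in> X \<union> Y)) ` Q"
    "S_min P (X \<union> Y) = (\<lambda>p. p ! (LEAST i. i < length p \<and> p ! i \<in> X \<union> Y)) ` Q"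
    unfolding S_max_def S_min_def Q_def by simp_all
  have index: "(GREATEST i. i < length p \<and> p ! i \<in> X \<union> Y) < length p"
    "(LEAST i. i < length p \<and> p ! i \<in> X \<union> Y) < length p" if "p \<in> Q" for p
  proof -
    have meets: "set p \<inter> (X \<union> Y) \<noteq> {}" using that unfolding Q_def by simp
    show "(GREATEST i. i < length p \<and> p ! i \<in> X \<union> Y) < length p"
      using meets by (rule Greatest_nth_index_less)
    show "(LEAST i. i < length p \<and> p ! i \<in> X \<union> Y) < length p"
      using meets by (rule Least_nth_index_less)
  qed
  show ?thesis
  proof (cases "\<exists>p0\<in>P. e \<in> set p0")
    case False
    then have "e \<notin> X" "e \<notin> Y"
      using X Y unfolding meets_each_path_once_def by blast+
    moreover have "e \<notin> S_max P (X \<union> Y)" "e \<notin> S_min P (X \<union> Y)"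
      using False index unfolding S_def Q_def by (auto dest!: nth_mem)
    ultimately show ?thesis by simp
  next
    case True
    then obtain p0 where p0: "p0 \<in> P" "e \<in> set p0" by blast
    have "\<exists>a. X \<inter> set p0 = {a}" "\<exists>b. Y \<inter> set p0 = {b}"
      using X Y p0(1) by (simp_all add: meets_each_path_once_def)
    then obtain a b where a: "X \<inter> set p0 = {a}" and b: "Y \<inter> set p0 = {b}" by blast
    then have ab: "set p0 \<inter> (X \<union> Y) = {a, b}" by blast
    then have "p0 \<in> Q" using p0(1) unfolding Q_def by blast
    have unique: "p = p0" if "p \<in> Q" "e \<in> set p" for p
      using disjoint[of p p0] that p0 unfolding Q_def by blast
    have "e \<in> S_max P (X \<union> Y) \<longleftrightarrow> e = p0 ! (GREATEST i. i < length p0 \<and> p0 ! i \<in> X \<union> Y)"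
      unfolding S_def by (rule mem_image_nth_iff_unique[OF unique index(1) \<open>p0 \<in> Q\<close>])
    moreover have "e \<in> S_min P (X \<union> Y) \<longleftrightarrow> e = p0 ! (LEAST i. i < length p0 \<and> p0 ! i \<in> X \<union> Y)"
      unfolding S_def by (rule mem_image_nth_iff_unique[OF unique index(2) \<open>p0 \<in> Q\<close>])
    moreover have "e \<in> X \<longleftrightarrow> e = a" "e \<in> Y \<longleftrightarrow> e = b" using a b p0(2) by blast+
    ultimately show ?thesis
      using last_first_occurrence_count[OF distinct[OF p0(1)] ab] by simp
  qed
qed

lemma mult_eq_sum: "mult e C = (\<Sum>i<length C. of_bool (e \<in> C ! i))"
  by (simp add: mult_def lessThan_def Collect_conj_eq)

theorem lemma3:
  fixes E :: "'e set" and src tgt :: "'e \<Rightarrow> 'v" and s t :: 'v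
    and P :: "'e list set" and k :: nat and e :: 'e
  assumes "finite E"
    and "max_disjoint_paths E src tgt s t P"
    and "k \<ge> 1"
    and "e \<in> E"
    and "C1 \<in> U_lr E src tgt s t k" and "C2 \<in> U_lr E src tgt s t k"
  shows "mult e (L_join P C1 C2) + mult e (L_meet P C1 C2) = mult e C1 + mult e C2"
proof -
  have len: "length C1 = k" "length C2 = k"
    and cuts: "set C1 \<subseteq> min_cuts E src tgt s t" "set C2 \<subseteq> min_cuts E src tgt s t"
    using assms(5,6) unfolding U_lr_def by auto
  have paths: "edge_disjoint_paths E src tgt s t P"
    using assms(2) unfolding max_disjoint_paths_def by blast
  then have disjoint: "\<And>p q. p \<in> P \<Longrightarrow> q \<in> P \<Longrightarrow> p \<noteq> q \<Longrightarrow> set p \<inter> set q = {}"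
    and distinct: "\<And>p. p \<in> P \<Longrightarrow> distinct p"
    unfolding edge_disjoint_paths_def by (blast, meson is_st_path_distinct)
  have once: "meets_each_path_once P (C1 ! i)" "meets_each_path_once P (C2 ! i)" if "i < k" for i
    using min_cut_meets_each_path_once[OF assms(1,2)] cuts len that by (metis nth_mem subsetD)+
  have "mult e (L_join P C1 C2) + mult e (L_meet P C1 C2)
      = (\<Sum>i<k. of_bool (e \<in> S_max P (C1 ! i \<union> C2 ! i)) + of_bool (e \<in> S_min P (C1 ! i \<union> C2 ! i)))"
    unfolding mult_eq_sum L_join_def L_meet_def using len by (simp add: sum.distrib)
  also have "\<dots> = (\<Sum>i<k. of_bool (e \<in> C1 ! i) + of_bool (e \<in> C2 ! i))"
    using S_max_S_min_count[OF disjoint distinct once] by simp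
  also have "\<dots> = mult e C1 + mult e C2"
    unfolding mult_eq_sum len by (simp add: sum.distrib)
  finally show ?thesis .
qed

end
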